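(* Let $\gamma_a,\gamma_s>0$, $\lambda\ge 0$, $q>0$, $\sigma_B>0$ and $\varepsilon_a\in(0,2)$. Let $\beta_a,\beta_s:\mathbb R\to\mathbb R$ be globally Lipschitz continuous with $\beta_a\ge 0$ and $\beta_s>0$, and set $\mathcal R_a(T_a)=q\beta_a(T_a)$, $\mathcal R_s(T_s)=q\beta_s(T_s)$. Let $T_a^{(0)}\ge 0$ and $T_s^{(0)}\ge 0$. Then the problem \[ \begin{cases} \gamma_a T_a'=-\lambda(T_a-T_s)+\varepsilon_a\sigma_B|T_s|^3T_s-2\varepsilon_a\sigma_B|T_a|^3T_a+\mathcal R_a(T_a),\\ \gamma_s T_s'=-\lambda(T_s-T_a)-\sigma_B|T_s|^3T_s+\varepsilon_a\sigma_B|T_a|^3T_a+\mathcal R_s(T_s),\\ T_a(0)=T_a^{(0)},\quad T_s(0)=T_s^{(0)} \end{cases} \] admits a unique solution, which is defined and bounded on $[0,+\infty)$. Moreover, $T_a(t)>0$ and $T_s(t)>0$ for every $t\in(0,+\infty)$. *)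

theory Defs
  imports "HOL-Analysis.Analysis"
begin

definition rhs_a :: "real \<Rightarrow> real \<Rightarrow> real \<Rightarrow> real \<Rightarrow> (real \<Rightarrow> real) \<Rightarrow> real \<Rightarrow> real \<Rightarrow> real" where
  "rhs_a lam epsa sigB q beta_a Ta Ts =
     - lam * (Ta - Ts) + epsa * sigB * (\<bar>Ts\<bar> ^ 3 * Ts) - 2 * epsa * sigB * (\<bar>Ta\<bar> ^ 3 * Ta)
     + q * beta_a Ta"

definition rhs_s :: "real \<Rightarrow> real \<Rightarrow> real \<Rightarrow> real \<Rightarrow> (real \<Rightarrow> real) \<Rightarrow> real \<Rightarrow> real \<Rightarrow> real" where
  "rhs_s lam epsa sigB q beta_s Ta Ts =
     - lam * (Ts - Ta) - sigB * (\<bar>Ts\<bar> ^ 3 * Ts) + epsa * sigB * (\<bar>Ta\<bar> ^ 3 * Ta)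
     + q * beta_s Ts"

definition is_solution ::
  "real \<Rightarrow> real \<Rightarrow> real \<Rightarrow> real \<Rightarrow> real \<Rightarrow> real \<Rightarrow> (real \<Rightarrow> real) \<Rightarrow> (real \<Rightarrow> real)
   \<Rightarrow> real \<Rightarrow> real \<Rightarrow> real set \<Rightarrow> (real \<Rightarrow> real) \<Rightarrow> (real \<Rightarrow> real) \<Rightarrow> bool" where
  "is_solution gam_a gam_s lam q sigB epsa beta_a beta_s Ta0 Ts0 I Ta Ts \<longleftrightarrow>
     Ta 0 = Ta0 \<and> Ts 0 = Ts0 \<and>
     (\<forall>t\<in>I. \<exists>Da Ds.
        (Ta has_real_derivative Da) (at t within I) \<and>
        (Ts has_real_derivative Ds) (at t within I) \<and>
        gam_a * Da = rhs_a lam epsa sigB q beta_a (Ta t) (Ts t) \<and>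
        gam_s * Ds = rhs_s lam epsa sigB q beta_s (Ta t) (Ts t))"

end

theory Submission
  imports Defs
begin

(* The right-hand side is only locally Lipschitz, so we first solve the system with its
   arguments clipped to a rectangle [0, Ma] x [0, Ms]. The clipped field is globally Lipschitz,
   and Picard iteration yields a solution on [0, +oo). Take Ms = r Ma with epsa < r^4 < 2 and
   Ma large: then the quartic radiation terms make the field point into the rectangle on the
   edges Ta = Ma and Ts = Ms, while beta_a >= 0 and beta_s > 0 make it point inwards on the
   edges Ta = 0 and Ts = 0. A barrier argument keeps the clipped solution in the rectangle,
   where clipping is inactive, so it solves the original system and is bounded. A zero of a
   component at a positive time would be an interior minimum at which the derivative is
   positive, which gives positivity. Uniqueness follows from Gronwall's inequality for the
   squared distance of two solutions, using the Lipschitz bound of the field on a compact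
   set containing both trajectories. *)

section \<open>Global solutions of globally Lipschitz ODEs\<close>

primrec picard_iterate :: "('a::banach \<Rightarrow> 'a) \<Rightarrow> 'a \<Rightarrow> nat \<Rightarrow> real \<Rightarrow> 'a" where
  "picard_iterate G x0 0 = (\<lambda>t. x0)"
| "picard_iterate G x0 (Suc k) = (\<lambda>t. x0 + integral {0..t} (\<lambda>s. G (picard_iterate G x0 k s)))"

lemma continuous_on_picard_iterate:
  assumes "continuous_on UNIV G"
  shows "continuous_on {0..T} (picard_iterate G x0 k)"
proof (induction k)
  case (Suc k)
  have "continuous_on {0..T} (\<lambda>s. G (picard_iterate G x0 k s))"
    using continuous_on_compose2[OF assms Suc] by auto
  then have "continuous_on {0..T} (\<lambda>t. integral {0..t} (\<lambda>s. G (picard_iterate G x0 k s)))"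
    by (intro indefinite_integral_continuous_1 integrable_continuous_interval)
  then show ?case by (auto intro: continuous_intros)
qed simp

lemma has_integral_monomial:
  fixes c t :: real
  assumes "0 \<le> t"
  shows "((\<lambda>s. c * s^k / fact k) has_integral c * t^Suc k / fact (Suc k)) {0..t}"
proof -
  have "((\<lambda>s. c * s^Suc k / fact (Suc k)) has_vector_derivative c * x^k / fact k) (at x within {0..t})"
    for x
  proof -
    have "DERIV (\<lambda>s. c * s^Suc k / fact (Suc k)) x :> c * (of_nat (Suc k) * x^k) / fact (Suc k)"
      using DERIV_pow[of "Suc k" x] by (intro DERIV_cdivide DERIV_cmult) simp
    moreover have "c * (of_nat (Suc k) * x^k) / fact (Suc k) = c * x^k / fact k"
      by (simp add: fact_Suc del: of_nat_Suc)
    ultimately show ?thesis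
      by (simp add: has_real_derivative_iff_has_vector_derivative[symmetric] has_field_derivative_at_within)
  qed
  from fundamental_theorem_of_calculus[OF assms this] show ?thesis by simp
qed

lemma picard_iterate_step_bound:
  assumes lip: "L-lipschitz_on UNIV G" and "0 \<le> t"
  shows "norm (picard_iterate G x0 (Suc k) t - picard_iterate G x0 k t)
           \<le> norm (G x0) * L^k * t^Suc k / fact (Suc k)"
  using \<open>0 \<le> t\<close>
proof (induction k arbitrary: t)
  case (Suc k)
  let ?X = "picard_iterate G x0"
  have L: "0 \<le> L" using lipschitz_on_nonneg[OF lip] .
  have int: "(\<lambda>s. G (?X j s)) integrable_on {0..t}" for j
    by (intro integrable_continuous_interval continuous_on_compose2[OF lipschitz_on_continuous_on[OF lip]]
        continuous_on_picard_iterate[OF lipschitz_on_continuous_on[OF lip]]) auto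
  have "?X (Suc (Suc k)) t - ?X (Suc k) t
      = integral {0..t} (\<lambda>s. G (?X (Suc k) s)) - integral {0..t} (\<lambda>s. G (?X k s))"
    by (simp only: picard_iterate.simps(2)) simp
  also have "\<dots> = integral {0..t} (\<lambda>s. G (?X (Suc k) s) - G (?X k s))"
    by (rule integral_diff[OF int int, symmetric])
  finally have "norm (?X (Suc (Suc k)) t - ?X (Suc k) t)
      = norm (integral {0..t} (\<lambda>s. G (?X (Suc k) s) - G (?X k s)))"
    by simp
  also have "\<dots> \<le> integral {0..t} (\<lambda>s. L * norm (G x0) * L^k * s^Suc k / fact (Suc k))"
  proof (rule integral_norm_bound_integral)
    fix s assume s: "s \<in> {0..t}"
    have "norm (G (?X (Suc k) s) - G (?X k s)) \<le> L * norm (?X (Suc k) s - ?X k s)"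
      using lipschitz_on_normD[OF lip] by simp
    also have "\<dots> \<le> L * (norm (G x0) * L^k * s^Suc k / fact (Suc k))"
      using Suc.IH[of s] s L by (intro mult_left_mono) auto
    finally show "norm (G (?X (Suc k) s) - G (?X k s)) \<le> L * norm (G x0) * L^k * s^Suc k / fact (Suc k)"
      by simp
  next
    show "(\<lambda>s. G (?X (Suc k) s) - G (?X k s)) integrable_on {0..t}"
      by (intro integrable_diff int)
    show "(\<lambda>s. L * norm (G x0) * L^k * s^Suc k / fact (Suc k)) integrable_on {0..t}"
      using has_integral_monomial[OF Suc.prems] by blast
  qed
  also have "\<dots> = L * norm (G x0) * L^k * t^Suc (Suc k) / fact (Suc (Suc k))"
    by (rule integral_unique[OF has_integral_monomial[OF Suc.prems]])
  also have "\<dots> = norm (G x0) * L^Suc k * t^Suc (Suc k) / fact (Suc (Suc k))"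
    by (simp only: power_Suc[of L k] mult_ac)
  finally show ?case .
qed simp

lemma picard_iterate_uniform_limit:
  assumes lip: "L-lipschitz_on UNIV G"
  obtains x where "\<And>T. uniform_limit {0..T} (picard_iterate G x0) x sequentially"
proof
  let ?X = "picard_iterate G x0"
  define x where "x t = x0 + (\<Sum>j. ?X (Suc j) t - ?X j t)" for t
  have L: "0 \<le> L" using lipschitz_on_nonneg[OF lip] .
  fix T
  have "uniform_limit {0..T} (\<lambda>n t. \<Sum>j<n. ?X (Suc j) t - ?X j t) (\<lambda>t. \<Sum>j. ?X (Suc j) t - ?X j t)
      sequentially"
  proof (rule Weierstrass_m_test)
    show "summable (\<lambda>j. norm (G x0) * T * (inverse (fact j) * (L * T)^j))"
      by (intro summable_mult summable_exp)
    fix j t assume t: "t \<in> {0..T}"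
    have "norm (?X (Suc j) t - ?X j t) \<le> norm (G x0) * L^j * t^Suc j / fact (Suc j)"
      using picard_iterate_step_bound[OF lip] t by auto
    also have "\<dots> \<le> norm (G x0) * L^j * T^Suc j / fact j"
      using t L by (intro frac_le mult_left_mono power_mono fact_mono) auto
    also have "\<dots> = norm (G x0) * T * (inverse (fact j) * (L * T)^j)"
      by (simp add: power_mult_distrib divide_inverse mult_ac)
    finally show "norm (?X (Suc j) t - ?X j t) \<le> norm (G x0) * T * (inverse (fact j) * (L * T)^j)" .
  qed
  moreover have "(\<Sum>j<n. ?X (Suc j) t - ?X j t) = ?X n t - x0" for n t
    using sum_lessThan_telescope[of "\<lambda>j. ?X j t" n] by simp
  moreover have "dist (?X n t - x0) (\<Sum>j. ?X (Suc j) t - ?X j t) = dist (?X n t) (x t)" for n t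
    by (simp add: x_def dist_norm algebra_simps)
  ultimately show "uniform_limit {0..T} ?X x sequentially"
    unfolding uniform_limit_iff by simp_all
qed

lemma picard_limit_integral_equation:
  assumes lip: "L-lipschitz_on UNIV G"
    and lim: "\<And>T. uniform_limit {0..T} (picard_iterate G x0) x sequentially" and "0 \<le> t"
  shows "x t = x0 + integral {0..t} (\<lambda>s. G (x s))"
proof -
  let ?X = "picard_iterate G x0"
  have cont: "continuous_on UNIV G" using lipschitz_on_continuous_on[OF lip] .
  have "uniform_limit {0..t} (\<lambda>n s. G (?X n s)) (G \<circ> x) sequentially"
    by (rule uniform_limit_compose[OF lim lipschitz_on_uniformly_continuous[OF lip]]) auto
  then obtain I J where I: "\<And>n. ((\<lambda>s. G (?X n s)) has_integral I n) {0..t}"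
    and J: "((G \<circ> x) has_integral J) {0..t}" and IJ: "I \<longlonglongrightarrow> J"
    by (rule uniform_limit_integral)
       (auto intro: continuous_on_compose2[OF cont continuous_on_picard_iterate[OF cont]])
  have "integral {0..t} (\<lambda>s. G (?X n s)) = I n" for n
    using I by (rule integral_unique)
  then have "(\<lambda>n. ?X (Suc n) t) \<longlonglongrightarrow> x0 + J"
    using tendsto_add[OF tendsto_const IJ] by simp
  moreover have "(\<lambda>n. ?X (Suc n) t) \<longlonglongrightarrow> x t"
    by (rule LIMSEQ_Suc, rule tendsto_uniform_limitI[OF lim]) (use \<open>0 \<le> t\<close> in auto)
  ultimately show ?thesis
    using J LIMSEQ_unique by (fastforce simp: integral_unique o_def)
qed

lemma lipschitz_ode_global_existence:
  fixes G :: "'a::banach \<Rightarrow> 'a"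
  assumes lip: "L-lipschitz_on UNIV G"
  obtains x where "x 0 = x0" and "\<And>t. 0 \<le> t \<Longrightarrow> (x has_vector_derivative G (x t)) (at t within {0..})"
proof -
  obtain x where lim: "\<And>T. uniform_limit {0..T} (picard_iterate G x0) x sequentially"
    using picard_iterate_uniform_limit[OF lip] by blast
  have cont: "continuous_on UNIV G" using lipschitz_on_continuous_on[OF lip] .
  have cont_Gx: "continuous_on {0..T} (\<lambda>s. G (x s))" for T
    using uniform_limit_theorem[OF always_eventually lim] continuous_on_picard_iterate[OF cont]
    by (intro continuous_on_compose2[OF cont]) auto
  have eq: "x t = x0 + integral {0..t} (\<lambda>s. G (x s))" if "0 \<le> t" for t
    by (rule picard_limit_integral_equation[OF lip lim that])
  have "(x has_vector_derivative G (x t)) (at t within {0..})" if "0 \<le> t" for t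
  proof -
    have t: "t \<in> {0..t+1}" using that by simp
    have "((\<lambda>u. x0 + integral {0..u} (\<lambda>s. G (x s))) has_vector_derivative G (x t)) (at t within {0..t+1})"
      using integral_has_vector_derivative[OF cont_Gx t] by (auto intro!: derivative_eq_intros)
    then have "(x has_vector_derivative G (x t)) (at t within {0..t+1})"
      by (rule has_vector_derivative_transform[OF t, rotated]) (auto simp: eq)
    moreover have "at t within {0..} = at t within {0..t+1}"
      by (rule at_within_nhd[where S="{..<t+1}"]) auto
    ultimately show ?thesis by simp
  qed
  with eq[of 0] that show ?thesis by simp
qed

section \<open>Comparison principles\<close>

lemma barrier_lower_bound:
  fixes f f' :: "real \<Rightarrow> real"
  assumes deriv: "\<And>t. 0 \<le> t \<Longrightarrow> (f has_real_derivative f' t) (at t within {0..})"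
    and "c \<le> f 0" and push: "\<And>t. 0 \<le> t \<Longrightarrow> f t < c \<Longrightarrow> 0 \<le> f' t" and "0 \<le> t"
  shows "c \<le> f t"
proof (rule ccontr)
  assume "\<not> c \<le> f t"
  then have ft: "f t < c" by simp
  have cont: "continuous_on {0..} f"
    using deriv by (intro DERIV_continuous_on) auto
  define S where "S = {s \<in> {0..t}. c \<le> f s}"
  define t0 where "t0 = Sup S"
  have "closed S" unfolding S_def
    by (rule continuous_on_closed_Collect_le) (auto intro: continuous_on_subset[OF cont])
  moreover have "0 \<in> S" using assms by (simp add: S_def)
  moreover have bdd: "bdd_above S" unfolding S_def by (rule bdd_aboveI[of _ t]) auto
  ultimately have "t0 \<in> S" unfolding t0_def using closed_contains_Sup by blast
  then have t0: "0 \<le> t0" "t0 < t" "c \<le> f t0"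
    using ft by (auto simp: S_def less_le)
  have below: "f s < c" if "t0 < s" "s \<le> t" for s
    using cSup_upper[OF _ bdd, of s] that t0 by (force simp: S_def t0_def)
  have "f t0 \<le> f t"
  proof (rule DERIV_nonneg_imp_increasing_open[OF less_imp_le[OF \<open>t0 < t\<close>]])
    fix s assume s: "t0 < s" "s < t"
    then have "at s within {0..} = at s" using t0 by (intro at_within_interior) auto
    then show "\<exists>y. DERIV f s :> y \<and> 0 \<le> y"
      using deriv[of s] push[of s] below[of s] s t0 by auto
  qed (use t0 in \<open>auto intro: continuous_on_subset[OF cont]\<close>)
  with t0 ft show False by simp
qed

lemma barrier_upper_bound:
  fixes f f' :: "real \<Rightarrow> real"
  assumes "\<And>t. 0 \<le> t \<Longrightarrow> (f has_real_derivative f' t) (at t within {0..})"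
    and "f 0 \<le> c" and "\<And>t. 0 \<le> t \<Longrightarrow> c < f t \<Longrightarrow> f' t \<le> 0" and "0 \<le> t"
  shows "f t \<le> c"
  using barrier_lower_bound[of "\<lambda>t. - f t" "\<lambda>t. - f' t" "- c" t] assms
  by (auto intro: DERIV_minus)

lemma deriv_zero_at_interior_min:
  fixes f :: "real \<Rightarrow> real"
  assumes "(f has_real_derivative D) (at t within {0..})" and "0 < t"
    and "\<And>s. 0 \<le> s \<Longrightarrow> f t \<le> f s"
  shows "D = 0"
proof (rule DERIV_local_min[where x = t and d = t])
  show "DERIV f t :> D"
    using assms(1,2) at_within_interior[of t "{0..}"] by simp
  show "\<forall>y. \<bar>t - y\<bar> < t \<longrightarrow> f t \<le> f y"
    using assms(3) by auto
qed fact

lemma gronwall_zero: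
  fixes w w' :: "real \<Rightarrow> real"
  assumes deriv: "\<And>t. t \<in> {0..T} \<Longrightarrow> (w has_real_derivative w' t) (at t within {0..T})"
    and growth: "\<And>t. t \<in> {0..T} \<Longrightarrow> w' t \<le> C * w t"
    and "w 0 = 0" and nonneg: "\<And>t. t \<in> {0..T} \<Longrightarrow> 0 \<le> w t" and t: "t \<in> {0..T}"
  shows "w t = 0"
proof -
  define v where "v s = exp (- C * s) * w s" for s
  have cont: "continuous_on {0..T} w" by (rule DERIV_continuous_on[OF deriv])
  have "v t \<le> v 0"
  proof (rule DERIV_nonpos_imp_decreasing_open[of 0 t v])
    fix s assume s: "0 < s" "s < t"
    then have "at s within {0..T} = at s" using t by (intro at_within_interior) auto
    then have "DERIV v s :> exp (- C * s) * (w' s - C * w s)"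
      using deriv[of s] s t unfolding v_def
      by (auto intro!: derivative_eq_intros simp: algebra_simps)
    moreover have "exp (- C * s) * (w' s - C * w s) \<le> 0"
      using growth[of s] s t by (intro mult_nonneg_nonpos) auto
    ultimately show "\<exists>y. DERIV v s :> y \<and> y \<le> 0" by blast
  qed (use t in \<open>auto simp: v_def intro!: continuous_intros continuous_on_subset[OF cont]\<close>)
  then have "w t \<le> 0" by (simp add: v_def \<open>w 0 = 0\<close> mult_le_0_iff)
  with nonneg[OF t] show ?thesis by simp
qed

lemma lipschitz_ode_unique:
  fixes x y :: "real \<Rightarrow> 'a::real_inner"
  assumes lip: "L-lipschitz_on S F" and "x ` {0..T} \<subseteq> S" and "y ` {0..T} \<subseteq> S"
    and dx: "\<And>t. t \<in> {0..T} \<Longrightarrow> (x has_vector_derivative F (x t)) (at t within {0..T})"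
    and dy: "\<And>t. t \<in> {0..T} \<Longrightarrow> (y has_vector_derivative F (y t)) (at t within {0..T})"
    and "x 0 = y 0" and "t \<in> {0..T}"
  shows "x t = y t"
proof -
  define w where "w s = (x s - y s) \<bullet> (x s - y s)" for s
  define w' where "w' s = 2 * ((x s - y s) \<bullet> (F (x s) - F (y s)))" for s
  have "(w has_real_derivative w' s) (at s within {0..T})" if s: "s \<in> {0..T}" for s
  proof -
    have d: "((\<lambda>s. x s - y s) has_derivative (\<lambda>h. h *\<^sub>R (F (x s) - F (y s)))) (at s within {0..T})"
      using has_vector_derivative_diff[OF dx[OF s] dy[OF s]] by (simp add: has_vector_derivative_def)
    show ?thesis
      unfolding has_field_derivative_def w_def
      by (rule has_derivative_eq_rhs[OF has_derivative_inner[OF d d]])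
         (auto simp: w'_def fun_eq_iff inner_commute algebra_simps)
  qed
  moreover have "w' s \<le> (2 * L) * w s" if "s \<in> {0..T}" for s
  proof -
    have "(x s - y s) \<bullet> (F (x s) - F (y s)) \<le> norm (x s - y s) * norm (F (x s) - F (y s))"
      by (rule norm_cauchy_schwarz)
    also have "\<dots> \<le> norm (x s - y s) * (L * norm (x s - y s))"
      using lipschitz_on_normD[OF lip, of "x s" "y s"] that assms(2,3)
      by (intro mult_left_mono) (auto simp: image_subset_iff)
    finally show ?thesis
      by (simp add: w_def w'_def power2_norm_eq_inner[symmetric] power2_eq_square mult_ac)
  qed
  ultimately have "w t = 0"
    by (rule gronwall_zero) (use \<open>x 0 = y 0\<close> \<open>t \<in> {0..T}\<close> in \<open>auto simp: w_def\<close>)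
  then show ?thesis by (simp add: w_def)
qed

section \<open>The two-temperature system\<close>

lemma power4_diff_le:
  fixes a b K :: real
  assumes "0 \<le> a" "0 \<le> b" "a \<le> K" "b \<le> K"
  shows "\<bar>a^4 - b^4\<bar> \<le> 4 * K^3 * \<bar>a - b\<bar>"
proof -
  have "a^3 + a^2*b + a*b^2 + b^3 \<le> K^3 + K^2*K + K*K^2 + K^3"
    using assms by (intro add_mono mult_mono power_mono) auto
  moreover have "a^4 - b^4 = (a - b) * (a^3 + a^2*b + a*b^2 + b^3)" by algebra
  ultimately show ?thesis
    using assms by (simp add: abs_mult mult_left_mono mult.commute power2_eq_square power3_eq_cube)
qed

lemma power4_add_le:
  fixes a b K :: real
  assumes "0 \<le> a" "0 \<le> b" "a \<le> K" "b \<le> K"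
  shows "a^4 + b^4 \<le> K^3 * (a + b)"
proof -
  have "a^3 * a \<le> K^3 * a" "b^3 * b \<le> K^3 * b"
    using assms by (auto intro: mult_right_mono power_mono)
  then show ?thesis by (simp add: power4_eq_xxxx power3_eq_cube algebra_simps)
qed

lemma abs_pow3_mult_diff_le:
  fixes x y K :: real
  assumes "\<bar>x\<bar> \<le> K" "\<bar>y\<bar> \<le> K"
  shows "\<bar>\<bar>x\<bar>^3 * x - \<bar>y\<bar>^3 * y\<bar> \<le> 4 * K^3 * \<bar>x - y\<bar>"
proof -
  have pos: "\<bar>z\<bar>^3 * z = z^4" if "0 \<le> z" for z :: real
    using that by (simp add: power4_eq_xxxx power3_eq_cube)
  have neg: "\<bar>z\<bar>^3 * z = - ((- z)^4)" if "z < 0" for z :: real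
    using that by (simp add: power4_eq_xxxx power3_eq_cube)
  have opposite: "\<bar>\<bar>a\<bar>^3 * a - \<bar>b\<bar>^3 * b\<bar> \<le> 4 * K^3 * \<bar>a - b\<bar>"
    if "0 \<le> a" "b < 0" "\<bar>a\<bar> \<le> K" "\<bar>b\<bar> \<le> K" for a b :: real
  proof -
    have "\<bar>\<bar>a\<bar>^3 * a - \<bar>b\<bar>^3 * b\<bar> \<le> K^3 * (a - b)"
      unfolding pos[OF that(1)] neg[OF that(2)] using power4_add_le[of a "- b" K] that by simp
    moreover have "K^3 * (a - b) \<le> 4 * K^3 * (a - b)"
      using that by (intro mult_right_mono) auto
    ultimately show ?thesis using that by simp
  qed
  consider "0 \<le> x" "0 \<le> y" | "x < 0" "y < 0" | "0 \<le> x" "y < 0" | "x < 0" "0 \<le> y"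
    by linarith
  then show ?thesis
  proof cases
    case 1
    then show ?thesis
      unfolding pos[OF 1(1)] pos[OF 1(2)] using power4_diff_le[of x y K] assms by simp
  next
    case 2
    then show ?thesis
      unfolding neg[OF 2(1)] neg[OF 2(2)] using power4_diff_le[of "- x" "- y" K] assms
      by (simp add: abs_minus_commute)
  next
    case 3
    then show ?thesis using opposite[of x y] assms by simp
  next
    case 4
    then show ?thesis using opposite[of y x] assms by (simp add: abs_minus_commute)
  qed
qed

lemma linear_le_quartic:
  fixes M C k :: real
  assumes "1 \<le> M" and "0 < k" and "C / k \<le> M"
  shows "C * M \<le> k * M^4"
proof -
  have "C * M \<le> (k * M) * M"
    using assms by (intro mult_right_mono) (auto simp: divide_le_eq mult.commute)
  also have "\<dots> \<le> k * M^4"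
    using assms mult_mono[of 1 M 1 M]
    by (simp add: power4_eq_xxxx mult_le_cancel_left1 mult.assoc)
  finally show ?thesis .
qed

lemma lipschitz_linear_growth:
  fixes f :: "real \<Rightarrow> real"
  assumes "L-lipschitz_on UNIV f"
  shows "f x \<le> \<bar>f 0\<bar> + L * \<bar>x\<bar>"
  using lipschitz_onD[OF assms, of x 0] by (simp add: dist_real_def)

lemma has_vector_derivative_Pair_iff:
  "((\<lambda>t. (f t, g t)) has_vector_derivative (f', g')) (at t within S) \<longleftrightarrow>
     (f has_vector_derivative f') (at t within S) \<and> (g has_vector_derivative g') (at t within S)"
proof
  assume "((\<lambda>t. (f t, g t)) has_vector_derivative (f', g')) (at t within S)"
  then have "((\<lambda>t. fst (f t, g t)) has_vector_derivative f') (at t within S)"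
    and "((\<lambda>t. snd (f t, g t)) has_vector_derivative g') (at t within S)"
    unfolding has_vector_derivative_def by (auto dest: has_derivative_fst has_derivative_snd)
  then show "(f has_vector_derivative f') (at t within S) \<and> (g has_vector_derivative g') (at t within S)"
    by simp
next
  assume "(f has_vector_derivative f') (at t within S) \<and> (g has_vector_derivative g') (at t within S)"
  then show "((\<lambda>t. (f t, g t)) has_vector_derivative (f', g')) (at t within S)"
    by (auto intro: has_vector_derivative_Pair)
qed

lemma has_real_derivative_fst:
  "(x has_vector_derivative v) F \<Longrightarrow> ((\<lambda>t. fst (x t)) has_real_derivative fst v) F"
  by (auto simp: has_real_derivative_iff_has_vector_derivative has_vector_derivative_def
      dest: has_derivative_fst)

lemma has_real_derivative_snd:
  "(x has_vector_derivative v) F \<Longrightarrow> ((\<lambda>t. snd (x t)) has_real_derivative snd v) F"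
  by (auto simp: has_real_derivative_iff_has_vector_derivative has_vector_derivative_def
      dest: has_derivative_snd)

definition clip :: "real \<Rightarrow> real \<Rightarrow> real" where
  "clip hi x = max 0 (min hi x)"

lemma clip_in_range: "0 \<le> hi \<Longrightarrow> clip hi x \<in> {0..hi}"
  by (auto simp: clip_def)

lemma clip_id: "x \<in> {0..hi} \<Longrightarrow> clip hi x = x"
  by (auto simp: clip_def)

lemma lipschitz_on_clip: "0 \<le> hi \<Longrightarrow> 1-lipschitz_on UNIV (clip hi)"
  by (rule lipschitz_onI) (auto simp: clip_def dist_real_def max_def min_def abs_if)

lemma is_solution_subset:
  assumes "is_solution gam_a gam_s lam q sigB epsa beta_a beta_s Ta0 Ts0 I Ta Ts" and "J \<subseteq> I"
  shows "is_solution gam_a gam_s lam q sigB epsa beta_a beta_s Ta0 Ts0 J Ta Ts"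
  using assms unfolding is_solution_def by (meson has_field_derivative_subset subsetD)

locale two_temperature_model =
  fixes gam_a gam_s lam q sigB epsa :: real and beta_a beta_s :: "real \<Rightarrow> real" and La Ls :: real
  assumes gam_a_pos: "0 < gam_a" and gam_s_pos: "0 < gam_s" and lam_nonneg: "0 \<le> lam"
    and q_pos: "0 < q" and sigB_pos: "0 < sigB" and epsa_pos: "0 < epsa" and epsa_less_2: "epsa < 2"
    and lipschitz_beta_a: "La-lipschitz_on UNIV beta_a"
    and lipschitz_beta_s: "Ls-lipschitz_on UNIV beta_s"
    and beta_a_nonneg: "\<And>x. 0 \<le> beta_a x" and beta_s_pos: "\<And>x. 0 < beta_s x"
begin

abbreviation Ra :: "real \<Rightarrow> real \<Rightarrow> real" where
  "Ra \<equiv> rhs_a lam epsa sigB q beta_a"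

abbreviation Rs :: "real \<Rightarrow> real \<Rightarrow> real" where
  "Rs \<equiv> rhs_s lam epsa sigB q beta_s"

abbreviation solves :: "real \<Rightarrow> real \<Rightarrow> real set \<Rightarrow> (real \<Rightarrow> real) \<Rightarrow> (real \<Rightarrow> real) \<Rightarrow> bool" where
  "solves \<equiv> is_solution gam_a gam_s lam q sigB epsa beta_a beta_s"

definition rhs_field :: "real \<times> real \<Rightarrow> real \<times> real" where
  "rhs_field p = (Ra (fst p) (snd p) / gam_a, Rs (fst p) (snd p) / gam_s)"

lemma solves_iff:
  "solves Ta0 Ts0 I Ta Ts \<longleftrightarrow> Ta 0 = Ta0 \<and> Ts 0 = Ts0 \<and>
     (\<forall>t\<in>I. ((\<lambda>t. (Ta t, Ts t)) has_vector_derivative rhs_field (Ta t, Ts t)) (at t within I))"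
proof -
  have "gam_a * Da = Ra a s \<longleftrightarrow> Da = Ra a s / gam_a" "gam_s * Ds = Rs a s \<longleftrightarrow> Ds = Rs a s / gam_s"
    for Da Ds a s
    using gam_a_pos gam_s_pos by (auto simp: field_simps)
  then show ?thesis
    by (simp add: is_solution_def rhs_field_def has_vector_derivative_Pair_iff
        has_real_derivative_iff_has_vector_derivative)
qed

lemma solves_has_real_derivative:
  assumes "solves Ta0 Ts0 I Ta Ts" and "t \<in> I"
  shows "(Ta has_real_derivative Ra (Ta t) (Ts t) / gam_a) (at t within I)"
    and "(Ts has_real_derivative Rs (Ta t) (Ts t) / gam_s) (at t within I)"
  using assms by (auto simp: solves_iff rhs_field_def has_vector_derivative_Pair_iff
      has_real_derivative_iff_has_vector_derivative)

lemma rhs_a_diff_le: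
  assumes "\<bar>a1\<bar> \<le> K" "\<bar>a2\<bar> \<le> K" "\<bar>s1\<bar> \<le> K" "\<bar>s2\<bar> \<le> K"
  shows "\<bar>Ra a1 s1 - Ra a2 s2\<bar> \<le> (lam + 16 * sigB * K^3 + q * La) * (\<bar>a1 - a2\<bar> + \<bar>s1 - s2\<bar>)"
proof -
  define Qa where "Qa = \<bar>a1\<bar>^3 * a1 - \<bar>a2\<bar>^3 * a2"
  define Qs where "Qs = \<bar>s1\<bar>^3 * s1 - \<bar>s2\<bar>^3 * s2"
  define B where "B = beta_a a1 - beta_a a2"
  have K: "0 \<le> K^3" using assms by simp
  have "Ra a1 s1 - Ra a2 s2 = - lam * (a1 - a2) + lam * (s1 - s2) + epsa * sigB * Qs
      + - 2 * epsa * sigB * Qa + q * B"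
    by (simp add: rhs_a_def Qa_def Qs_def B_def algebra_simps)
  then have "\<bar>Ra a1 s1 - Ra a2 s2\<bar> \<le> \<bar>- lam * (a1 - a2)\<bar> + \<bar>lam * (s1 - s2)\<bar>
      + \<bar>epsa * sigB * Qs\<bar> + \<bar>- 2 * epsa * sigB * Qa\<bar> + \<bar>q * B\<bar>"
    by linarith
  also have "\<dots> = lam * \<bar>a1 - a2\<bar> + lam * \<bar>s1 - s2\<bar> + epsa * sigB * \<bar>Qs\<bar>
      + 2 * epsa * sigB * \<bar>Qa\<bar> + q * \<bar>B\<bar>"
    using lam_nonneg epsa_pos sigB_pos q_pos by (simp add: abs_mult)
  also have "\<dots> \<le> lam * \<bar>a1 - a2\<bar> + lam * \<bar>s1 - s2\<bar> + 2 * sigB * (4 * K^3 * \<bar>s1 - s2\<bar>)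
      + 4 * sigB * (4 * K^3 * \<bar>a1 - a2\<bar>) + q * (La * \<bar>a1 - a2\<bar>)"
  proof -
    have "epsa * sigB * \<bar>Qs\<bar> \<le> 2 * sigB * (4 * K^3 * \<bar>s1 - s2\<bar>)"
      using abs_pow3_mult_diff_le[OF assms(3,4)] epsa_pos epsa_less_2 sigB_pos K
      unfolding Qs_def by (intro mult_mono) auto
    moreover have "2 * epsa * sigB * \<bar>Qa\<bar> \<le> 4 * sigB * (4 * K^3 * \<bar>a1 - a2\<bar>)"
      using abs_pow3_mult_diff_le[OF assms(1,2)] epsa_pos epsa_less_2 sigB_pos K
      unfolding Qa_def by (intro mult_mono) auto
    moreover have "q * \<bar>B\<bar> \<le> q * (La * \<bar>a1 - a2\<bar>)"
      using lipschitz_onD[OF lipschitz_beta_a, of a1 a2] q_pos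
      unfolding B_def by (intro mult_left_mono) (auto simp: dist_real_def)
    ultimately show ?thesis by linarith
  qed
  also have "\<dots> \<le> (lam + 16 * sigB * K^3 + q * La) * (\<bar>a1 - a2\<bar> + \<bar>s1 - s2\<bar>)"
    using sigB_pos q_pos K lipschitz_on_nonneg[OF lipschitz_beta_a]
    by (simp add: algebra_simps add_mono mult_nonneg_nonneg)
  finally show ?thesis .
qed

lemma rhs_s_diff_le:
  assumes "\<bar>a1\<bar> \<le> K" "\<bar>a2\<bar> \<le> K" "\<bar>s1\<bar> \<le> K" "\<bar>s2\<bar> \<le> K"
  shows "\<bar>Rs a1 s1 - Rs a2 s2\<bar> \<le> (lam + 16 * sigB * K^3 + q * Ls) * (\<bar>a1 - a2\<bar> + \<bar>s1 - s2\<bar>)"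
proof -
  define Qa where "Qa = \<bar>a1\<bar>^3 * a1 - \<bar>a2\<bar>^3 * a2"
  define Qs where "Qs = \<bar>s1\<bar>^3 * s1 - \<bar>s2\<bar>^3 * s2"
  define B where "B = beta_s s1 - beta_s s2"
  have K: "0 \<le> K^3" using assms by simp
  have "Rs a1 s1 - Rs a2 s2 = lam * (a1 - a2) + - lam * (s1 - s2) + - sigB * Qs
      + epsa * sigB * Qa + q * B"
    by (simp add: rhs_s_def Qa_def Qs_def B_def algebra_simps)
  then have "\<bar>Rs a1 s1 - Rs a2 s2\<bar> \<le> \<bar>lam * (a1 - a2)\<bar> + \<bar>- lam * (s1 - s2)\<bar>
      + \<bar>- sigB * Qs\<bar> + \<bar>epsa * sigB * Qa\<bar> + \<bar>q * B\<bar>"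
    by linarith
  also have "\<dots> = lam * \<bar>a1 - a2\<bar> + lam * \<bar>s1 - s2\<bar> + sigB * \<bar>Qs\<bar>
      + epsa * sigB * \<bar>Qa\<bar> + q * \<bar>B\<bar>"
    using lam_nonneg epsa_pos sigB_pos q_pos by (simp add: abs_mult)
  also have "\<dots> \<le> lam * \<bar>a1 - a2\<bar> + lam * \<bar>s1 - s2\<bar> + sigB * (4 * K^3 * \<bar>s1 - s2\<bar>)
      + 2 * sigB * (4 * K^3 * \<bar>a1 - a2\<bar>) + q * (Ls * \<bar>s1 - s2\<bar>)"
  proof -
    have "sigB * \<bar>Qs\<bar> \<le> sigB * (4 * K^3 * \<bar>s1 - s2\<bar>)"
      using abs_pow3_mult_diff_le[OF assms(3,4)] sigB_pos
      unfolding Qs_def by (intro mult_left_mono) auto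
    moreover have "epsa * sigB * \<bar>Qa\<bar> \<le> 2 * sigB * (4 * K^3 * \<bar>a1 - a2\<bar>)"
      using abs_pow3_mult_diff_le[OF assms(1,2)] epsa_pos epsa_less_2 sigB_pos K
      unfolding Qa_def by (intro mult_mono) auto
    moreover have "q * \<bar>B\<bar> \<le> q * (Ls * \<bar>s1 - s2\<bar>)"
      using lipschitz_onD[OF lipschitz_beta_s, of s1 s2] q_pos
      unfolding B_def by (intro mult_left_mono) (auto simp: dist_real_def)
    ultimately show ?thesis by linarith
  qed
  also have "\<dots> \<le> (lam + 16 * sigB * K^3 + q * Ls) * (\<bar>a1 - a2\<bar> + \<bar>s1 - s2\<bar>)"
    using sigB_pos q_pos K lipschitz_on_nonneg[OF lipschitz_beta_s]
    by (simp add: algebra_simps add_mono mult_nonneg_nonneg)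
  finally show ?thesis .
qed

lemma rhs_field_lipschitz_on_square:
  assumes "0 \<le> K"
  shows "\<exists>L. L-lipschitz_on ({-K..K} \<times> {-K..K}) rhs_field"
proof -
  define Ca where "Ca = (lam + 16 * sigB * K^3 + q * La) / gam_a"
  define Cs where "Cs = (lam + 16 * sigB * K^3 + q * Ls) / gam_s"
  have "Ca \<ge> 0" "Cs \<ge> 0"
    using assms lam_nonneg sigB_pos q_pos gam_a_pos gam_s_pos lipschitz_on_nonneg[OF lipschitz_beta_a]
      lipschitz_on_nonneg[OF lipschitz_beta_s]
    by (auto simp: Ca_def Cs_def)
  have "(2 * (Ca + Cs))-lipschitz_on ({-K..K} \<times> {-K..K}) rhs_field"
  proof (rule lipschitz_onI)
    fix p p' assume "p \<in> {-K..K} \<times> {-K..K}" "p' \<in> {-K..K} \<times> {-K..K}"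
    then obtain a s a' s' where p: "p = (a, s)" "p' = (a', s')"
      and bounds: "\<bar>a\<bar> \<le> K" "\<bar>s\<bar> \<le> K" "\<bar>a'\<bar> \<le> K" "\<bar>s'\<bar> \<le> K"
      by (cases p, cases p') auto
    have sum: "\<bar>a - a'\<bar> + \<bar>s - s'\<bar> \<le> 2 * dist p p'"
      using dist_fst_le[of p p'] dist_snd_le[of p p'] by (simp add: p dist_real_def)
    have "dist (rhs_field p) (rhs_field p') \<le> \<bar>Ra a s - Ra a' s'\<bar> / gam_a + \<bar>Rs a s - Rs a' s'\<bar> / gam_s"
      using sqrt_sum_squares_le_sum gam_a_pos gam_s_pos
      by (simp add: rhs_field_def p dist_Pair_Pair dist_real_def flip: diff_divide_distrib)
    also have "\<dots> \<le> Ca * (\<bar>a - a'\<bar> + \<bar>s - s'\<bar>) + Cs * (\<bar>a - a'\<bar> + \<bar>s - s'\<bar>)"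
      unfolding Ca_def Cs_def times_divide_eq_left using gam_a_pos gam_s_pos
      by (intro add_mono divide_right_mono rhs_a_diff_le rhs_s_diff_le bounds) auto
    also have "\<dots> = (Ca + Cs) * (\<bar>a - a'\<bar> + \<bar>s - s'\<bar>)"
      by (simp add: algebra_simps)
    also have "\<dots> \<le> 2 * (Ca + Cs) * dist p p'"
      using mult_left_mono[OF sum, of "Ca + Cs"] \<open>Ca \<ge> 0\<close> \<open>Cs \<ge> 0\<close>
      by (metis add_nonneg_nonneg mult.assoc mult.commute)
    finally show "dist (rhs_field p) (rhs_field p') \<le> 2 * (Ca + Cs) * dist p p'" .
  qed (use \<open>Ca \<ge> 0\<close> \<open>Cs \<ge> 0\<close> in simp)
  then show ?thesis ..
qed

lemma solves_unique:
  assumes "solves Ta0 Ts0 {0..T} Ua Us" and "solves Ta0 Ts0 {0..T} Va Vs" and "t \<in> {0..T}"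
  shows "Ua t = Va t \<and> Us t = Vs t"
proof -
  define u where "u = (\<lambda>t. (Ua t, Us t))"
  define v where "v = (\<lambda>t. (Va t, Vs t))"
  have du: "\<And>t. t \<in> {0..T} \<Longrightarrow> (u has_vector_derivative rhs_field (u t)) (at t within {0..T})"
    and dv: "\<And>t. t \<in> {0..T} \<Longrightarrow> (v has_vector_derivative rhs_field (v t)) (at t within {0..T})"
    and "u 0 = v 0"
    using assms(1,2) by (auto simp: solves_iff u_def v_def)
  have "compact (u ` {0..T} \<union> v ` {0..T})"
    using continuous_on_vector_derivative[OF du] continuous_on_vector_derivative[OF dv]
    by (intro compact_Un compact_continuous_image) auto
  then obtain K where K: "\<And>p. p \<in> u ` {0..T} \<union> v ` {0..T} \<Longrightarrow> norm p \<le> K"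
    using compact_imp_bounded bounded_iff by metis
  have "norm (u 0) \<le> K" using K assms(3) by auto
  then have "0 \<le> K" by (rule order_trans[OF norm_ge_zero])
  have "norm p \<le> K \<Longrightarrow> p \<in> {-K..K} \<times> {-K..K}" for p :: "real \<times> real"
    using norm_fst_le[of "fst p" "snd p"] norm_snd_le[of "snd p" "fst p"]
    by (cases p) (auto simp: abs_le_iff)
  then have "u ` {0..T} \<subseteq> {-K..K} \<times> {-K..K}" "v ` {0..T} \<subseteq> {-K..K} \<times> {-K..K}"
    using K by blast+
  moreover obtain L where "L-lipschitz_on ({-K..K} \<times> {-K..K}) rhs_field"
    using rhs_field_lipschitz_on_square[OF \<open>0 \<le> K\<close>] by blast
  ultimately have "u t = v t"
    using lipschitz_ode_unique du dv \<open>u 0 = v 0\<close> assms(3) by blast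
  then show ?thesis by (simp add: u_def v_def)
qed

definition invariant_rectangle :: "real \<Rightarrow> real \<Rightarrow> bool" where
  "invariant_rectangle Ma Ms \<longleftrightarrow> 0 \<le> Ma \<and> 0 \<le> Ms \<and>
     (\<forall>s\<in>{0..Ms}. Ra Ma s \<le> 0) \<and> (\<forall>a\<in>{0..Ma}. Rs a Ms \<le> 0)"

lemma rhs_a_right_edge_le:
  assumes "1 \<le> M" and "0 < r" and "s \<in> {0..r * M}"
  shows "Ra M s \<le> (lam * r + q * (\<bar>beta_a 0\<bar> + La)) * M - epsa * sigB * (2 - r^4) * M^4"
proof -
  have "lam * s \<le> lam * (r * M)" "0 \<le> lam * M"
    using assms lam_nonneg by (auto intro: mult_left_mono)
  then have "- lam * (M - s) \<le> lam * r * M" by (simp add: algebra_simps)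
  moreover have "s^4 \<le> r^4 * M^4"
    using assms power_mono[of s "r * M" 4] by (simp add: power_mult_distrib)
  then have "epsa * sigB * (\<bar>s\<bar>^3 * s) \<le> epsa * sigB * (r^4 * M^4)"
    using assms epsa_pos sigB_pos by (simp add: power4_eq_xxxx power3_eq_cube)
  moreover have "q * beta_a M \<le> q * (\<bar>beta_a 0\<bar> + La) * M"
  proof -
    have "beta_a M \<le> \<bar>beta_a 0\<bar> * M + La * M"
      using lipschitz_linear_growth[OF lipschitz_beta_a, of M] assms
        mult_left_mono[of 1 M "\<bar>beta_a 0\<bar>"] by simp
    then have "q * beta_a M \<le> q * (\<bar>beta_a 0\<bar> * M + La * M)"
      using q_pos by (intro mult_left_mono) auto
    then show ?thesis by (simp add: algebra_simps)
  qed
  moreover have "\<bar>M\<bar>^3 * M = M^4" using assms by (simp add: power4_eq_xxxx power3_eq_cube)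
  ultimately show ?thesis by (simp add: rhs_a_def algebra_simps)
qed

lemma rhs_s_top_edge_le:
  assumes "1 \<le> M" and "0 < r" and "a \<in> {0..M}"
  shows "Rs a (r * M) \<le> (lam + q * (\<bar>beta_s 0\<bar> + Ls * r)) * M - sigB * (r^4 - epsa) * M^4"
proof -
  have "lam * a \<le> lam * M" "0 \<le> lam * (r * M)"
    using assms lam_nonneg by (auto intro: mult_left_mono)
  then have "- lam * (r * M - a) \<le> lam * M" by (simp add: algebra_simps)
  moreover have "a^4 \<le> M^4"
    using assms by (intro power_mono) auto
  then have "epsa * sigB * (\<bar>a\<bar>^3 * a) \<le> epsa * sigB * M^4"
    using assms epsa_pos sigB_pos by (simp add: power4_eq_xxxx power3_eq_cube)
  moreover have "q * beta_s (r * M) \<le> q * (\<bar>beta_s 0\<bar> + Ls * r) * M"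
  proof -
    have "beta_s (r * M) \<le> \<bar>beta_s 0\<bar> * M + Ls * r * M"
      using lipschitz_linear_growth[OF lipschitz_beta_s, of "r * M"] assms
        mult_left_mono[of 1 M "\<bar>beta_s 0\<bar>"] by (simp add: abs_mult mult.assoc)
    then have "q * beta_s (r * M) \<le> q * (\<bar>beta_s 0\<bar> * M + Ls * r * M)"
      using q_pos by (intro mult_left_mono) auto
    then show ?thesis by (simp add: algebra_simps)
  qed
  moreover have "\<bar>r * M\<bar>^3 * (r * M) = r^4 * M^4"
    using assms by (simp add: power4_eq_xxxx power3_eq_cube abs_mult)
  ultimately show ?thesis by (simp add: rhs_s_def algebra_simps)
qed

lemma invariant_rectangle_exists: "\<exists>Ma Ms. a0 \<le> Ma \<and> s0 \<le> Ms \<and> invariant_rectangle Ma Ms"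
proof -
  define r where "r = root 4 ((epsa + 2) / 2)"
  have r: "0 < r" "r^4 = (epsa + 2) / 2"
    using epsa_pos by (simp_all add: r_def real_root_gt_zero)
  define ka where "ka = epsa * sigB * (2 - r^4)"
  define ks where "ks = sigB * (r^4 - epsa)"
  define Ca where "Ca = lam * r + q * (\<bar>beta_a 0\<bar> + La)"
  define Cs where "Cs = lam + q * (\<bar>beta_s 0\<bar> + Ls * r)"
  have "0 < ka" "0 < ks"
    using epsa_pos epsa_less_2 sigB_pos by (simp_all add: ka_def ks_def r)
  define M where "M = max 1 (max a0 (max (s0 / r) (max (Ca / ka) (Cs / ks))))"
  have M: "1 \<le> M" "a0 \<le> M" "s0 / r \<le> M" "Ca / ka \<le> M" "Cs / ks \<le> M"
    by (auto simp: M_def)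
  have "Ra M s \<le> 0" if "s \<in> {0..r * M}" for s
    using rhs_a_right_edge_le[OF M(1) r(1) that] linear_le_quartic[OF M(1) \<open>0 < ka\<close> M(4)]
    by (simp add: Ca_def ka_def)
  moreover have "Rs a (r * M) \<le> 0" if "a \<in> {0..M}" for a
    using rhs_s_top_edge_le[OF M(1) r(1) that] linear_le_quartic[OF M(1) \<open>0 < ks\<close> M(5)]
    by (simp add: Cs_def ks_def)
  moreover have "s0 \<le> r * M"
    using M(3) r(1) by (simp add: divide_le_eq mult.commute)
  ultimately show ?thesis
    using M r(1) by (intro exI[of _ M] exI[of _ "r * M"]) (simp add: invariant_rectangle_def)
qed

lemma rhs_a_left_edge_nonneg: "0 \<le> s \<Longrightarrow> 0 \<le> Ra 0 s"
  using lam_nonneg epsa_pos sigB_pos q_pos beta_a_nonneg[of 0] by (simp add: rhs_a_def)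

lemma rhs_a_left_edge_pos:
  assumes "0 < s"
  shows "0 < Ra 0 s"
proof -
  have "0 \<le> lam * s" "0 < epsa * sigB * (s^3 * s)" "0 \<le> q * beta_a 0"
    using assms lam_nonneg epsa_pos sigB_pos q_pos beta_a_nonneg[of 0] by simp_all
  then show ?thesis using assms by (simp add: rhs_a_def)
qed

lemma rhs_s_bottom_edge_pos: "0 \<le> a \<Longrightarrow> 0 < Rs a 0"
  using lam_nonneg epsa_pos sigB_pos q_pos beta_s_pos[of 0]
  by (simp add: rhs_s_def add_nonneg_pos)

definition clipped_field :: "real \<Rightarrow> real \<Rightarrow> real \<times> real \<Rightarrow> real \<times> real" where
  "clipped_field Ma Ms p = rhs_field (clip Ma (fst p), clip Ms (snd p))"

lemma clipped_field_lipschitz: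
  assumes "0 \<le> Ma" and "0 \<le> Ms"
  shows "\<exists>L. L-lipschitz_on UNIV (clipped_field Ma Ms)"
proof -
  define K where "K = max Ma Ms"
  have K: "0 \<le> K" using assms by (simp add: K_def)
  define proj where "proj p = (clip Ma (fst p), clip Ms (snd p))" for p :: "real \<times> real"
  have fst: "1-lipschitz_on UNIV (fst :: real \<times> real \<Rightarrow> real)"
    and snd: "1-lipschitz_on UNIV (snd :: real \<times> real \<Rightarrow> real)"
    by (rule lipschitz_onI; simp add: dist_fst_le dist_snd_le)+
  have "1-lipschitz_on UNIV (\<lambda>p::real \<times> real. clip Ma (fst p))"
    and "1-lipschitz_on UNIV (\<lambda>p::real \<times> real. clip Ms (snd p))"
    using lipschitz_on_compose2[OF fst lipschitz_on_subset[OF lipschitz_on_clip[OF assms(1)] subset_UNIV]]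
      lipschitz_on_compose2[OF snd lipschitz_on_subset[OF lipschitz_on_clip[OF assms(2)] subset_UNIV]]
    by simp_all
  then obtain Lp where Lp: "Lp-lipschitz_on UNIV proj"
    unfolding proj_def using lipschitz_on_Pair by blast
  have "clip Ma u \<in> {-K..K}" "clip Ms u \<in> {-K..K}" for u
    using clip_in_range[OF assms(1), of u] clip_in_range[OF assms(2), of u] by (auto simp: K_def)
  then have "proj ` UNIV \<subseteq> {-K..K} \<times> {-K..K}"
    by (auto simp: proj_def)
  moreover obtain L where "L-lipschitz_on ({-K..K} \<times> {-K..K}) rhs_field"
    using rhs_field_lipschitz_on_square[OF K] by blast
  ultimately have "L-lipschitz_on (proj ` UNIV) rhs_field"
    using lipschitz_on_subset by blast
  then have "(L * Lp)-lipschitz_on UNIV (\<lambda>p. rhs_field (proj p))"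
    by (rule lipschitz_on_compose2[OF Lp])
  then show ?thesis by (auto simp: clipped_field_def proj_def)
qed

lemma clipped_solution_in_rectangle:
  assumes rect: "invariant_rectangle Ma Ms" and init: "x 0 \<in> {0..Ma} \<times> {0..Ms}"
    and deriv: "\<And>t. 0 \<le> t \<Longrightarrow> (x has_vector_derivative clipped_field Ma Ms (x t)) (at t within {0..})"
    and "0 \<le> t"
  shows "x t \<in> {0..Ma} \<times> {0..Ms}"
proof -
  define a where "a t = clip Ma (fst (x t))" for t
  define s where "s t = clip Ms (snd (x t))" for t
  have range: "a t \<in> {0..Ma}" "s t \<in> {0..Ms}" for t
    using rect clip_in_range by (auto simp: a_def s_def invariant_rectangle_def)
  have da: "((\<lambda>t. fst (x t)) has_real_derivative Ra (a t) (s t) / gam_a) (at t within {0..})"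
    and ds: "((\<lambda>t. snd (x t)) has_real_derivative Rs (a t) (s t) / gam_s) (at t within {0..})"
    if "0 \<le> t" for t
    using has_real_derivative_fst[OF deriv[OF that]] has_real_derivative_snd[OF deriv[OF that]]
    by (simp_all add: clipped_field_def rhs_field_def a_def s_def)
  have "0 \<le> fst (x t)"
  proof (rule barrier_lower_bound[OF da _ _ \<open>0 \<le> t\<close>])
    fix t assume "0 \<le> t" "fst (x t) < 0"
    then have "a t = 0" by (simp add: a_def clip_def)
    then show "0 \<le> Ra (a t) (s t) / gam_a"
      using rhs_a_left_edge_nonneg range(2)[of t] gam_a_pos by simp
  qed (use init in auto)
  moreover have "fst (x t) \<le> Ma"
  proof (rule barrier_upper_bound[OF da _ _ \<open>0 \<le> t\<close>])
    fix t assume "0 \<le> t" "Ma < fst (x t)"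
    then have "a t = Ma" using rect by (simp add: a_def clip_def invariant_rectangle_def)
    then show "Ra (a t) (s t) / gam_a \<le> 0"
      using rect range(2)[of t] gam_a_pos by (simp add: invariant_rectangle_def divide_nonpos_pos)
  qed (use init in auto)
  moreover have "0 \<le> snd (x t)"
  proof (rule barrier_lower_bound[OF ds _ _ \<open>0 \<le> t\<close>])
    fix t assume "0 \<le> t" "snd (x t) < 0"
    then have "s t = 0" by (simp add: s_def clip_def)
    then show "0 \<le> Rs (a t) (s t) / gam_s"
      using rhs_s_bottom_edge_pos[of "a t"] range(1)[of t] gam_s_pos by simp
  qed (use init in auto)
  moreover have "snd (x t) \<le> Ms"
  proof (rule barrier_upper_bound[OF ds _ _ \<open>0 \<le> t\<close>])
    fix t assume "0 \<le> t" "Ms < snd (x t)"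
    then have "s t = Ms" using rect by (simp add: s_def clip_def invariant_rectangle_def)
    then show "Rs (a t) (s t) / gam_s \<le> 0"
      using rect range(1)[of t] gam_s_pos by (simp add: invariant_rectangle_def divide_nonpos_pos)
  qed (use init in auto)
  ultimately show ?thesis by (simp add: mem_Times_iff)
qed

lemma bounded_nonneg_solution_exists:
  assumes "0 \<le> Ta0" and "0 \<le> Ts0"
  obtains Ta Ts Ma Ms where "solves Ta0 Ts0 {0..} Ta Ts"
    and "\<And>t. 0 \<le> t \<Longrightarrow> Ta t \<in> {0..Ma} \<and> Ts t \<in> {0..Ms}"
proof -
  obtain Ma Ms where "Ta0 \<le> Ma" "Ts0 \<le> Ms" and rect: "invariant_rectangle Ma Ms"
    using invariant_rectangle_exists by blast
  then have "0 \<le> Ma" "0 \<le> Ms" by (simp_all add: invariant_rectangle_def)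
  then obtain L where "L-lipschitz_on UNIV (clipped_field Ma Ms)"
    using clipped_field_lipschitz by blast
  then obtain x where x0: "x 0 = (Ta0, Ts0)"
    and dx: "\<And>t. 0 \<le> t \<Longrightarrow> (x has_vector_derivative clipped_field Ma Ms (x t)) (at t within {0..})"
    using lipschitz_ode_global_existence by blast
  have in_rect: "x t \<in> {0..Ma} \<times> {0..Ms}" if "0 \<le> t" for t
    using clipped_solution_in_rectangle[OF rect _ dx that] x0 assms \<open>Ta0 \<le> Ma\<close> \<open>Ts0 \<le> Ms\<close> by simp
  then have "clipped_field Ma Ms (x t) = rhs_field (x t)" if "0 \<le> t" for t
    using that by (auto simp: clipped_field_def clip_id mem_Times_iff)
  then have "solves Ta0 Ts0 {0..} (\<lambda>t. fst (x t)) (\<lambda>t. snd (x t))"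
    using dx x0 by (simp add: solves_iff)
  then show ?thesis
    by (rule that) (use in_rect in \<open>auto simp: mem_Times_iff\<close>)
qed

lemma nonneg_solution_positive:
  assumes sol: "solves Ta0 Ts0 {0..} Ta Ts"
    and nonneg: "\<And>t. 0 \<le> t \<Longrightarrow> 0 \<le> Ta t \<and> 0 \<le> Ts t" and "0 < t"
  shows "0 < Ta t \<and> 0 < Ts t"
proof -
  have Ts_pos: "0 < Ts t" if "0 < t" for t
  proof (rule ccontr)
    assume "\<not> 0 < Ts t"
    then have "Ts t = 0" using nonneg[of t] that by simp
    then have "Rs (Ta t) (Ts t) / gam_s = 0"
      using nonneg that by (intro deriv_zero_at_interior_min[OF solves_has_real_derivative(2)[OF sol]]) auto
    moreover have "0 < Rs (Ta t) (Ts t) / gam_s"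
      using rhs_s_bottom_edge_pos \<open>Ts t = 0\<close> nonneg[of t] that gam_s_pos by simp
    ultimately show False by linarith
  qed
  have "0 < Ta t"
  proof (rule ccontr)
    assume "\<not> 0 < Ta t"
    then have "Ta t = 0" using nonneg[of t] \<open>0 < t\<close> by simp
    then have "Ra (Ta t) (Ts t) / gam_a = 0"
      using nonneg \<open>0 < t\<close>
      by (intro deriv_zero_at_interior_min[OF solves_has_real_derivative(1)[OF sol]]) auto
    moreover have "0 < Ra (Ta t) (Ts t) / gam_a"
      using rhs_a_left_edge_pos Ts_pos[OF \<open>0 < t\<close>] \<open>Ta t = 0\<close> gam_a_pos by simp
    ultimately show False by linarith
  qed
  with Ts_pos[OF \<open>0 < t\<close>] show ?thesis by simp
qed

end

theorem proposition2p1: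
  fixes gam_a gam_s lam q sigB epsa Ta0 Ts0 :: real
    and beta_a beta_s :: "real \<Rightarrow> real"
  assumes "gam_a > 0" and "gam_s > 0" and "lam \<ge> 0" and "q > 0" and "sigB > 0"
    and "0 < epsa" and "epsa < 2"
    and "\<exists>L. L-lipschitz_on UNIV beta_a" and "\<exists>L. L-lipschitz_on UNIV beta_s"
    and "\<forall>x. beta_a x \<ge> 0" and "\<forall>x. beta_s x > 0"
    and "Ta0 \<ge> 0" and "Ts0 \<ge> 0"
  shows "\<exists>Ta Ts.
           is_solution gam_a gam_s lam q sigB epsa beta_a beta_s Ta0 Ts0 {0..} Ta Ts
         \<and> bounded (Ta ` {0..}) \<and> bounded (Ts ` {0..})
         \<and> (\<forall>t>0. Ta t > 0 \<and> Ts t > 0)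
         \<and> (\<forall>T>0. \<forall>Ua Us.
               is_solution gam_a gam_s lam q sigB epsa beta_a beta_s Ta0 Ts0 {0..T} Ua Us
               \<longrightarrow> (\<forall>t\<in>{0..T}. Ua t = Ta t \<and> Us t = Ts t))"
proof -
  obtain La Ls where "La-lipschitz_on UNIV beta_a" and "Ls-lipschitz_on UNIV beta_s"
    using assms(8,9) by blast
  then interpret two_temperature_model gam_a gam_s lam q sigB epsa beta_a beta_s La Ls
    using assms by unfold_locales auto
  obtain Ta Ts Ma Ms where sol: "solves Ta0 Ts0 {0..} Ta Ts"
    and box: "\<And>t. 0 \<le> t \<Longrightarrow> Ta t \<in> {0..Ma} \<and> Ts t \<in> {0..Ms}"
    using bounded_nonneg_solution_exists[OF assms(12,13)] by blast
  have "Ta ` {0..} \<subseteq> {0..Ma}" "Ts ` {0..} \<subseteq> {0..Ms}"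
    using box by (auto simp: image_subset_iff)
  then have "bounded (Ta ` {0..})" "bounded (Ts ` {0..})"
    using bounded_subset[OF bounded_closed_interval] by blast+
  moreover have "0 < Ta t \<and> 0 < Ts t" if "0 < t" for t
    using nonneg_solution_positive[OF sol _ that] box by simp
  moreover have "Ua t = Ta t \<and> Us t = Ts t"
    if "solves Ta0 Ts0 {0..T} Ua Us" and "t \<in> {0..T}" for T Ua Us t
    using solves_unique[OF that(1) is_solution_subset[OF sol] that(2)] by simp
  ultimately show ?thesis
    using sol by (intro exI[of _ Ta] exI[of _ Ts]) auto
qed

end
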